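(* Let $d\ge2$, $q\ge2$, $p\in\mathbb{Z}/q\mathbb{Z}$ with $\gcd(p,q)=1$, and let $\mathcal{O}_1,\dots,\mathcal{O}_n$ be pairwise distinct $\sigma_d$-rotational orbits, each with rotation number $p/q$. Let $A=\bigcup_{i=1}^n\mathcal{O}_i=\{u_0<\dots<u_{nq-1}\}$. Then $A$ is $\sigma_d$-rotational with $\sigma_d(u_j)=u_{j+np}$ for all $j\in\mathbb{Z}/nq\mathbb{Z}$ (rotation number $p/q$) if and only if the representative sequences of $\mathcal{O}_1,\dots,\mathcal{O}_n$ can be interlaced.
   Context: $\mathbb{T}=\mathbb{R}/\mathbb{Z}$, ordered by representatives in $[0,1)$; $\sigma_d(t)=dt$. A finite set $\{u_0<\dots<u_{N-1}\}$ is $\sigma_d$-rotational if $\sigma_d(u_j)=u_{j+P}$ for a fixed $0\ne P\in\mathbb{Z}/N\mathbb{Z}$; rotation number $P/N$. $q$-tuple notation: $(a_0,\dots,a_{q-1})$, $a_i\in\{0,\dots,d-1\}$, denotes the point with base-$d$ expansion $0.\overline{a_0\dots a_{q-1}}$, digit indices in $\mathbb{Z}/q\mathbb{Z}$. A $(d-1)$-sequence of length $k$ is a nondecreasing sequence of length $k$ with terms in $\{0,\dots,d-2\}$. Representative sequence: let $1\le p\le q-1$, $p^*$ the inverse of $p$ mod $q$, and let $\mathcal{O}$ be a $\sigma_d$-rotational orbit with rotation number $p/q$ whose least element is $t=(a_0,\dots,a_{q-1})$. Its representative sequence is $c_0,\dots,c_{q-1}$ with $c_k=a_{kp^*}$ for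 $0\le k\le q-p-1$ and $c_k=a_{kp^*}-1$ for $q-p\le k\le q-1$; it is a $(d-1)$-sequence of length $q$. Sequences $s_i=b^{(i)}_0,\dots,b^{(i)}_{q-1}$ ($1\le i\le n$) can be interlaced if for some relabeling (permutation) of the indices $i$, the sequence $b^{(1)}_0,\dots,b^{(n)}_0,b^{(1)}_1,\dots,b^{(n)}_1,\dots,b^{(1)}_{q-1},\dots,b^{(n)}_{q-1}$ is a $(d-1)$-sequence. *)

theory Defs
  imports Complex_Main
begin

text \<open>The circle T = R/Z is represented by reals in [0,1); sigma_d(t) = frac(d t).\<close>

definition sigma :: "nat \<Rightarrow> real \<Rightarrow> real" where
  "sigma d t = frac (real d * t)"

definition rotates_by :: "nat \<Rightarrow> real set \<Rightarrow> nat \<Rightarrow> bool" where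
  "rotates_by d A P \<longleftrightarrow> finite A \<and> A \<subseteq> {0..<1} \<and>
     (\<forall>j < card A. sigma d (sorted_list_of_set A ! j)
                   = sorted_list_of_set A ! ((j + P) mod card A))"

definition rotational :: "nat \<Rightarrow> real set \<Rightarrow> bool" where
  "rotational d A \<longleftrightarrow> (\<exists>P. P mod card A \<noteq> 0 \<and> rotates_by d A P)"

definition rot_orbit :: "nat \<Rightarrow> nat \<Rightarrow> nat \<Rightarrow> real set \<Rightarrow> bool" where
  "rot_orbit d p q Orb \<longleftrightarrow> card Orb = q \<and> rotational d Orb \<and> rotates_by d Orb p \<and>
     (\<exists>t\<in>Orb. Orb = range (\<lambda>k. (sigma d ^^ k) t))"

text \<open>i-th base-d digit (i = 0,1,...) of t in [0,1): t = 0.a_0 a_1 a_2 ...\<close>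
definition digit :: "nat \<Rightarrow> real \<Rightarrow> nat \<Rightarrow> int" where
  "digit d t i = \<lfloor>real d ^ Suc i * t\<rfloor> mod int d"

definition inv_mod :: "nat \<Rightarrow> nat \<Rightarrow> nat" where
  "inv_mod p q = (SOME x. x < q \<and> (p * x) mod q = 1)"

text \<open>Representative sequence c_0..c_{q-1} of an orbit with rotation number p/q whose
  least element is t = (a_0,...,a_{q-1}).\<close>
definition rep_seq :: "nat \<Rightarrow> nat \<Rightarrow> nat \<Rightarrow> real \<Rightarrow> nat \<Rightarrow> int" where
  "rep_seq d q p t k =
     (if k < q - p then digit d t ((k * inv_mod p q) mod q)
      else digit d t ((k * inv_mod p q) mod q) - 1)"

definition dseq :: "nat \<Rightarrow> nat \<Rightarrow> (nat \<Rightarrow> int) \<Rightarrow> bool" where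
  "dseq d len f \<longleftrightarrow> (\<forall>m < len. 0 \<le> f m \<and> f m \<le> int d - 2) \<and>
     (\<forall>m m'. m \<le> m' \<and> m' < len \<longrightarrow> f m \<le> f m')"

definition interlaceable :: "nat \<Rightarrow> nat \<Rightarrow> nat \<Rightarrow> (nat \<Rightarrow> nat \<Rightarrow> int) \<Rightarrow> bool" where
  "interlaceable d q n s \<longleftrightarrow> (\<exists>\<pi>. bij_betw \<pi> {..<n} {..<n} \<and>
     dseq d (n * q) (\<lambda>m. s (\<pi> (m mod n)) (m div n)))"

end

theory Submission
  imports Defs "HOL-Number_Theory.Cong"
begin

text \<open>
  Let \<open>y\<^sub>0 < \<dots> < y\<^sub>N\<^sub>-\<^sub>1\<close> be points of \<open>[0,1)\<close> with \<open>\<sigma>\<^sub>d(y\<^sub>m) = y\<^sub>m\<^sub>+\<^sub>P\<close> (indices mod \<open>N\<close>), and put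
  \<open>C\<^sub>m = \<lfloor>d y\<^sub>m\<rfloor> - [m \<ge> N - P]\<close>. Extending \<open>y\<close> to all of \<open>\<nat>\<close> by \<open>y\<^sub>m\<^sub>+\<^sub>N = y\<^sub>m + 1\<close> (and \<open>C\<close> by
  \<open>C\<^sub>m\<^sub>+\<^sub>N = C\<^sub>m + d - 1\<close>) turns \<open>\<sigma>\<^sub>d\<close> into the exact identity \<open>d y\<^sub>m = C\<^sub>m + y\<^sub>m\<^sub>+\<^sub>P\<close>, so the gaps
  \<open>g\<^sub>m = y\<^sub>m\<^sub>+\<^sub>1 - y\<^sub>m\<close> satisfy \<open>d g\<^sub>m = (C\<^sub>m\<^sub>+\<^sub>1 - C\<^sub>m) + g\<^sub>m\<^sub>+\<^sub>P\<close>. If \<open>y\<close> increases, all gaps lie in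
  \<open>(0,1)\<close>, so the integer \<open>C\<^sub>m\<^sub>+\<^sub>1 - C\<^sub>m\<close> exceeds \<open>-1\<close> and \<open>C\<close> is a \<open>(d-1)\<close>-sequence. Conversely, if
  \<open>C\<close> is a \<open>(d-1)\<close>-sequence, the smallest gap \<open>g\<close> satisfies \<open>d g \<ge> g\<close>, hence \<open>g \<ge> 0\<close>.

  For one orbit of rotation number \<open>p/q\<close>, \<open>C\<close> is its representative sequence. For the union of \<open>n\<close> orbits, a
  listing of the points in which the residue class \<open>r\<close> mod \<open>n\<close> runs through orbit \<open>\<pi>(r)\<close> has
  \<open>C\<close> equal to the \<open>\<pi>\<close>-interlacing of the representative sequences and shifts indices by \<open>n p\<close>.
  The union is rotational with shift \<open>n p\<close> exactly when its sorted listing is of this form, so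
  the case \<open>N = n q\<close>, \<open>P = n p\<close> of the first paragraph gives the theorem.
\<close>

text \<open>For the sorted points of an orbit with rotation number \<open>P/N\<close> this is its representative
  sequence (lemma \<open>rep_seq_rot_orbit\<close>).\<close>

definition leading_digit_seq :: "nat \<Rightarrow> nat \<Rightarrow> nat \<Rightarrow> (nat \<Rightarrow> real) \<Rightarrow> nat \<Rightarrow> int" where
  "leading_digit_seq d N P y m = \<lfloor>real d * y m\<rfloor> - (if m < N - P then 0 else 1)"

locale rotation_sequence =
  fixes d N P :: nat and y :: "nat \<Rightarrow> real"
  assumes d_ge_2: "d \<ge> 2" and P_pos: "0 < P" and P_less: "P < N"
    and y_range: "m < N \<Longrightarrow> 0 \<le> y m \<and> y m < 1"
    and sigma_y: "m < N \<Longrightarrow> sigma d (y m) = y ((m + P) mod N)"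
begin

definition lift :: "nat \<Rightarrow> real" where
  "lift m = y (m mod N) + real (m div N)"

definition lifted_digits :: "nat \<Rightarrow> int" where
  "lifted_digits m = leading_digit_seq d N P y (m mod N) + (int d - 1) * int (m div N)"

definition gap :: "nat \<Rightarrow> real" where
  "gap m = lift (Suc m) - lift m"

lemma N_pos: "0 < N"
  using P_less by simp

lemma lift_add_mult: "lift (m + N * k) = lift m + real k"
  using N_pos by (simp add: lift_def)

lemma lift_eq: "m < N \<Longrightarrow> lift m = y m"
  by (simp add: lift_def)

lemma d_times_lift_less:
  assumes "m < N"
  shows "real d * lift m = of_int (leading_digit_seq d N P y m) + lift (m + P)"
proof -
  have digits: "real d * y m = of_int \<lfloor>real d * y m\<rfloor> + y ((m + P) mod N)"
    using sigma_y[OF assms] by (simp add: sigma_def frac_def)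
  have "(m + P) div N = (if m < N - P then 0 else 1)"
    using assms P_less by (simp add: div_if le_div_geq) linarith
  then have "lift (m + P) = y ((m + P) mod N) + (if m < N - P then 0 else 1)"
    by (simp add: lift_def)
  with digits show ?thesis
    using lift_eq[OF assms] by (cases "m < N - P") (simp_all add: leading_digit_seq_def)
qed

lemma d_times_lift: "real d * lift m = of_int (lifted_digits m) + lift (m + P)"
proof -
  define r k where "r = m mod N" and "k = m div N"
  have m: "m = r + N * k" and r: "r < N"
    using N_pos by (simp_all add: r_def k_def)
  have "real d * lift m = real d * lift r + real d * real k"
    by (simp add: m lift_add_mult distrib_left)
  also have "\<dots> = of_int (leading_digit_seq d N P y r) + lift (r + P) + real d * real k"
    by (simp add: d_times_lift_less[OF r])
  also have "lift (r + P) = lift (m + P) - real k"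
    using lift_add_mult[of "r + P" k] by (simp add: m add.assoc add.commute)
  finally show ?thesis
    using d_ge_2 by (simp add: lifted_digits_def r_def k_def algebra_simps)
qed

lemma d_times_gap: "real d * gap m = of_int (lifted_digits (Suc m) - lifted_digits m) + gap (m + P)"
  using d_times_lift[of m] d_times_lift[of "Suc m"] by (simp add: gap_def algebra_simps)

lemma gap_mod: "gap (m mod N) = gap m"
proof -
  have "lift (Suc m) = lift (Suc (m mod N)) + real (m div N)"
    using lift_add_mult[of "Suc (m mod N)" "m div N"] by (simp add: mod_mult_div_eq)
  moreover have "lift m = lift (m mod N) + real (m div N)"
    using lift_add_mult[of "m mod N" "m div N"] by (simp add: mod_mult_div_eq)
  ultimately show ?thesis
    by (simp add: gap_def)
qed

lemma gap_eq: "Suc m < N \<Longrightarrow> gap m = y (Suc m) - y m"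
  by (simp add: gap_def lift_eq)

lemma gap_wrap: "gap (N - 1) = y 0 + 1 - y (N - 1)"
proof -
  have "lift N = y 0 + 1"
    using lift_add_mult[of 0 1] by (simp add: lift_eq N_pos)
  then show ?thesis
    using N_pos by (simp add: gap_def lift_eq)
qed

lemma lifted_digits_step_if_dseq:
  assumes dseq: "dseq d N (leading_digit_seq d N P y)"
  shows "lifted_digits m \<le> lifted_digits (Suc m)"
proof (cases "Suc (m mod N) < N")
  case True
  then have "Suc m mod N = Suc (m mod N)" "Suc m div N = m div N"
    by (simp_all add: mod_Suc div_Suc)
  with True dseq show ?thesis
    by (simp add: lifted_digits_def dseq_def)
next
  case False
  let ?C = "leading_digit_seq d N P y"
  have "m mod N = N - 1" "Suc m mod N = 0" "Suc m div N = Suc (m div N)"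
    using False N_pos mod_less_divisor[OF N_pos, of m] by (simp_all add: mod_Suc div_Suc)
  moreover have "0 \<le> ?C 0" "?C (N - 1) \<le> int d - 2"
    using dseq N_pos unfolding dseq_def by auto
  ultimately show ?thesis
    by (simp add: lifted_digits_def algebra_simps)
qed

lemma gap_nonneg_if_lifted_digits_mono:
  assumes step: "\<And>m. lifted_digits m \<le> lifted_digits (Suc m)"
  shows "gap m \<ge> 0"
proof -
  obtain m0 where m0: "m0 < N" "\<And>m. m < N \<Longrightarrow> gap m0 \<le> gap m"
  proof -
    have "Min (gap ` {..<N}) \<in> gap ` {..<N}"
      using N_pos by (intro Min_in) auto
    then obtain m0 where "m0 < N" "gap m0 = Min (gap ` {..<N})"
      by auto
    then show ?thesis
      using that by simp
  qed
  \<comment> \<open>The smallest gap is at least the gap it is carried to, and \<open>d > 1\<close> expands it.\<close>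
  have "gap m0 \<le> gap (m0 + P)"
    using m0(2)[of "(m0 + P) mod N"] N_pos by (simp add: gap_mod)
  also have "\<dots> \<le> real d * gap m0"
    using d_times_gap[of m0] step[of m0] by simp
  finally have "(real d - 1) * gap m0 \<ge> 0"
    by (simp add: algebra_simps)
  then have "gap m0 \<ge> 0"
    using d_ge_2 by (simp add: zero_le_mult_iff)
  then show ?thesis
    using m0(2)[of "m mod N"] N_pos by (simp add: gap_mod)
qed

lemma mono_if_dseq:
  assumes "dseq d N (leading_digit_seq d N P y)" and "Suc m < N"
  shows "y m \<le> y (Suc m)"
  using gap_nonneg_if_lifted_digits_mono[OF lifted_digits_step_if_dseq[OF assms(1)], of m]
    gap_eq[OF assms(2)] by simp

lemma gap_bounds_if_strict_mono:
  assumes inc: "\<And>m. Suc m < N \<Longrightarrow> y m < y (Suc m)"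
  shows "0 < gap m \<and> gap m < 1"
proof -
  have "y 0 < y (N - 1)"
    using lift_Suc_mono_less_ivl[of "{m. Suc m < N}" y 0 "N - 1"] inc P_pos P_less
    by fastforce
  moreover have "m mod N < N"
    using N_pos by simp
  ultimately have "0 < gap (m mod N) \<and> gap (m mod N) < 1"
  proof (cases "Suc (m mod N) < N")
    case True
    then show ?thesis
      using inc[OF True] y_range[of "m mod N"] y_range[OF True] by (simp add: gap_eq)
  next
    case False
    then have "m mod N = N - 1"
      using \<open>m mod N < N\<close> by simp
    then show ?thesis
      using \<open>y 0 < y (N - 1)\<close> y_range[of 0] y_range[of "N - 1"] gap_wrap N_pos by simp
  qed
  then show ?thesis
    by (simp add: gap_mod)
qed

lemma lifted_digits_step_if_strict_mono:
  assumes "\<And>m. Suc m < N \<Longrightarrow> y m < y (Suc m)"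
  shows "lifted_digits m \<le> lifted_digits (Suc m)"
proof -
  note gap_bounds = gap_bounds_if_strict_mono[OF assms]
  have "real d * gap m > 0"
    using gap_bounds[of m] d_ge_2 by simp
  then have "of_int (lifted_digits (Suc m) - lifted_digits m) > (-1 :: real)"
    using d_times_gap[of m] gap_bounds[of "m + P"] by linarith
  then show ?thesis
    by simp
qed

lemma dseq_if_strict_mono:
  assumes inc: "\<And>m. Suc m < N \<Longrightarrow> y m < y (Suc m)"
  shows "dseq d N (leading_digit_seq d N P y)"
proof -
  let ?C = "leading_digit_seq d N P y"
  have mono: "?C m \<le> ?C m'" if "m \<le> m'" "m' < N" for m m'
    using lift_Suc_mono_le[of lifted_digits m m'] lifted_digits_step_if_strict_mono[OF inc] that
    by (simp add: lifted_digits_def)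
  have "0 \<le> ?C 0"
    using y_range[of 0] N_pos P_less by (simp add: leading_digit_seq_def)
  moreover have "?C (N - 1) \<le> int d - 2"
  proof -
    have "real d * y (N - 1) < real d"
      using y_range[of "N - 1"] N_pos d_ge_2 by simp
    then have "\<lfloor>real d * y (N - 1)\<rfloor> < int d"
      by (simp add: floor_less_iff)
    moreover have "\<not> N - 1 < N - P"
      using P_pos by simp
    ultimately show ?thesis
      by (simp add: leading_digit_seq_def)
  qed
  ultimately show ?thesis
    unfolding dseq_def
  proof (intro conjI allI impI)
    fix m
    assume "m < N"
    then have "?C 0 \<le> ?C m" "?C m \<le> ?C (N - 1)"
      using mono by simp_all
    then show "0 \<le> ?C m" "?C m \<le> int d - 2"
      using \<open>0 \<le> ?C 0\<close> \<open>?C (N - 1) \<le> int d - 2\<close> by simp_all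
  qed (use mono in blast)
qed

end

lemma rotates_by_iterate:
  assumes "rotates_by d A P" and "j < card A"
  shows "(sigma d ^^ t) (sorted_list_of_set A ! j) = sorted_list_of_set A ! ((j + t * P) mod card A)"
proof (induction t)
  case 0
  then show ?case
    using assms(2) by simp
next
  case (Suc t)
  have "(j + t * P) mod card A < card A"
    using assms(2) by simp
  then have "(sigma d ^^ Suc t) (sorted_list_of_set A ! j)
      = sorted_list_of_set A ! (((j + t * P) mod card A + P) mod card A)"
    using Suc assms(1) by (simp add: rotates_by_def)
  also have "((j + t * P) mod card A + P) mod card A = (j + Suc t * P) mod card A"
    by (simp only: mod_add_left_eq) (simp add: algebra_simps)
  finally show ?case .
qed

lemma rot_orbit_closed:
  assumes "rot_orbit d p q Orb" and "s \<in> Orb"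
  shows "(sigma d ^^ j) s \<in> Orb"
proof -
  let ?xs = "sorted_list_of_set Orb"
  have fin: "finite Orb" and rot: "rotates_by d Orb p"
    using assms(1) by (simp_all add: rot_orbit_def rotates_by_def)
  then obtain a where a: "a < card Orb" "s = ?xs ! a"
    using assms(2) by (metis in_set_conv_nth length_sorted_list_of_set set_sorted_list_of_set)
  then have "(a + j * p) mod card Orb < card Orb"
    by simp
  then show ?thesis
    using rotates_by_iterate[OF rot a(1)] a(2) fin
    by (metis length_sorted_list_of_set nth_mem set_sorted_list_of_set)
qed

lemma rot_orbit_periodic:
  assumes "rot_orbit d p q Orb" and "s \<in> Orb"
  shows "(sigma d ^^ q) s = s"
proof -
  let ?xs = "sorted_list_of_set Orb"
  have fin: "finite Orb" and rot: "rotates_by d Orb p" and card: "card Orb = q"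
    using assms(1) by (simp_all add: rot_orbit_def rotates_by_def)
  then obtain a where a: "a < q" "s = ?xs ! a"
    using assms(2) by (metis in_set_conv_nth length_sorted_list_of_set set_sorted_list_of_set)
  then show ?thesis
    using rotates_by_iterate[OF rot, of a q] card by simp
qed

lemma rot_orbit_subset_if_meet:
  assumes O1: "rot_orbit d p q O1" and O2: "rot_orbit d p' q' O2"
    and "s \<in> O1" and "s \<in> O2"
  shows "O1 \<subseteq> O2"
proof
  fix z
  assume "z \<in> O1"
  obtain t where t: "t \<in> O1" "O1 = range (\<lambda>k. (sigma d ^^ k) t)"
    using O1 by (auto simp: rot_orbit_def)
  then obtain k m where s: "s = (sigma d ^^ k) t" and z: "z = (sigma d ^^ m) t"
    using \<open>s \<in> O1\<close> \<open>z \<in> O1\<close> by auto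
  have "q \<ge> 1"
    using O1 t(1) by (auto simp: rot_orbit_def rotates_by_def Suc_le_eq card_gt_0_iff)
  have "(sigma d ^^ (q * i)) t = t" for i
    by (induction i) (simp_all add: funpow_add rot_orbit_periodic[OF O1 t(1)])
  \<comment> \<open>Going once more around the orbit of \<open>t\<close> passes through \<open>s\<close> before reaching \<open>z\<close>.\<close>
  then have "z = (sigma d ^^ (m + q * k)) t"
    by (simp add: z funpow_add)
  also have "m + q * k = (m + (q - 1) * k) + k"
    using \<open>q \<ge> 1\<close> by (cases q) simp_all
  finally have "z = (sigma d ^^ (m + (q - 1) * k)) s"
    by (simp add: s funpow_add)
  then show "z \<in> O2"
    using rot_orbit_closed[OF O2 \<open>s \<in> O2\<close>] by simp
qed

lemma inv_mod_correct:
  assumes "coprime p q" and "q \<ge> 2"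
  shows "(p * inv_mod p q) mod q = 1"
proof -
  obtain x where "[p * x = 1] (mod q)"
    using cong_solve_coprime_nat[OF assms(1)] by auto
  then have "(p * (x mod q)) mod q = 1"
    using assms(2) by (simp add: cong_def mod_mult_right_eq)
  then have "\<exists>y. y < q \<and> (p * y) mod q = 1"
    using assms(2) by (intro exI[of _ "x mod q"]) auto
  then show ?thesis
    unfolding inv_mod_def by (rule someI2_ex) simp
qed

lemma mult_inv_mod_mult_mod:
  assumes "coprime p q" and "q \<ge> 2" and "k < q"
  shows "(k * inv_mod p q * p) mod q = k"
proof -
  have "(k * inv_mod p q * p) mod q = (k * ((p * inv_mod p q) mod q)) mod q"
    by (metis mod_mult_right_eq mult.assoc mult.commute)
  then show ?thesis
    using inv_mod_correct[OF assms(1,2)] assms(3) by simp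
qed

lemma sigma_iterate_eq_frac:
  assumes "0 \<le> t" and "t < 1"
  shows "(sigma d ^^ i) t = frac (real d ^ i * t)"
proof (induction i)
  case 0
  then show ?case
    using assms by (simp add: frac_eq)
next
  case (Suc i)
  let ?z = "real d ^ i * t"
  have "real d * frac ?z = real d ^ Suc i * t + of_int (- (int d * \<lfloor>?z\<rfloor>))"
    by (simp add: frac_def algebra_simps)
  then have "frac (real d * frac ?z) = frac (real d ^ Suc i * t)"
    by (metis frac_add_of_int_right)
  with Suc show ?case
    by (simp add: sigma_def)
qed

lemma digit_eq_floor_sigma_iterate:
  assumes "d \<ge> 1" and "0 \<le> t" and "t < 1"
  shows "digit d t i = \<lfloor>real d * (sigma d ^^ i) t\<rfloor>"
proof -
  let ?z = "real d ^ i * t"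
  have "real d * frac ?z < real d"
    using assms(1) frac_lt_1[of ?z] by simp
  then have bounds: "0 \<le> \<lfloor>real d * frac ?z\<rfloor>" "\<lfloor>real d * frac ?z\<rfloor> < int d"
    by (simp_all add: floor_less_iff)
  have "real d ^ Suc i * t = real d * frac ?z + of_int (int d * \<lfloor>?z\<rfloor>)"
    by (simp add: frac_def algebra_simps)
  then have "\<lfloor>real d ^ Suc i * t\<rfloor> = \<lfloor>real d * frac ?z\<rfloor> + int d * \<lfloor>?z\<rfloor>"
    by (metis floor_add_int)
  then have "digit d t i = \<lfloor>real d * frac ?z\<rfloor>"
    using bounds by (simp add: digit_def)
  then show ?thesis
    using sigma_iterate_eq_frac[OF assms(2,3)] by simp
qed

lemma rep_seq_rot_orbit:
  assumes orb: "rot_orbit d p q Orb" and "coprime p q" and "q \<ge> 2" and "d \<ge> 1" and "k < q"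
  shows "rep_seq d q p (Min Orb) k = leading_digit_seq d q p (\<lambda>k. sorted_list_of_set Orb ! k) k"
proof -
  let ?xs = "sorted_list_of_set Orb" and ?j = "(k * inv_mod p q) mod q"
  have fin: "finite Orb" and sub: "Orb \<subseteq> {0..<1}" and card: "card Orb = q"
    and rot: "rotates_by d Orb p"
    using orb by (simp_all add: rot_orbit_def rotates_by_def)
  then have "Orb \<noteq> {}"
    using assms(3) by auto
  then have min: "Min Orb = ?xs ! 0" and "Min Orb \<in> Orb"
    using fin sorted_list_of_set_nonempty[of Orb] by simp_all
  \<comment> \<open>The digit of index \<open>k p\<^sup>*\<close> of the least point is the first digit of the \<open>k\<close>-th point.\<close>
  have "(0 + ?j * p) mod q = k"
    using mult_inv_mod_mult_mod[OF assms(2,3,5)] by (simp add: mod_mult_left_eq)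
  then have "(sigma d ^^ ?j) (Min Orb) = ?xs ! k"
    using rotates_by_iterate[OF rot, of 0 ?j] assms(3) card min by simp
  moreover have "0 \<le> Min Orb" "Min Orb < 1"
    using sub \<open>Min Orb \<in> Orb\<close> by auto
  ultimately show ?thesis
    using digit_eq_floor_sigma_iterate[OF assms(4)] by (simp add: rep_seq_def leading_digit_seq_def)
qed

lemma add_mult_less_mult:
  fixes r n k q :: nat
  assumes "r < n" and "k < q"
  shows "r + n * k < n * q"
proof -
  have "r + n * k < n * Suc k"
    using assms(1) by simp
  also have "\<dots> \<le> n * q"
    by (rule mult_le_mono2) (use assms(2) in simp)
  finally show ?thesis .
qed

lemma dseq_cong: "(\<And>m. m < N \<Longrightarrow> f m = g m) \<Longrightarrow> dseq d N f = dseq d N g"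
  unfolding dseq_def by (metis le_less_trans)

locale rotational_orbits =
  fixes d p q n :: nat and Orb :: "nat \<Rightarrow> real set"
  assumes d_ge_2: "d \<ge> 2" and q_ge_2: "q \<ge> 2" and p_less: "p < q" and coprime: "coprime p q"
    and n_pos: "n \<ge> 1"
    and orbit: "i < n \<Longrightarrow> rot_orbit d p q (Orb i)"
    and orbits_distinct: "i < n \<Longrightarrow> j < n \<Longrightarrow> i \<noteq> j \<Longrightarrow> Orb i \<noteq> Orb j"
begin

abbreviation orbit_union :: "real set" where
  "orbit_union \<equiv> \<Union>i<n. Orb i"

definition interlace :: "(nat \<Rightarrow> nat) \<Rightarrow> nat \<Rightarrow> real" where
  "interlace \<pi> m = sorted_list_of_set (Orb (\<pi> (m mod n))) ! (m div n)"

lemma p_pos: "0 < p"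
  using coprime q_ge_2 by (cases p) simp_all

lemma index_bounds:
  assumes "m < n * q"
  shows "m mod n < n" and "m div n < q"
  using assms n_pos by (simp_all add: div_less_iff_less_mult mult.commute)

lemma orbit_facts:
  assumes "i < n"
  shows "finite (Orb i)" and "Orb i \<subseteq> {0..<1}" and "card (Orb i) = q"
    and "rotates_by d (Orb i) p"
  using orbit[OF assms] by (simp_all add: rot_orbit_def rotates_by_def)

lemma orbit_sorted_list:
  assumes "i < n"
  shows "length (sorted_list_of_set (Orb i)) = q" and "set (sorted_list_of_set (Orb i)) = Orb i"
  using orbit_facts[OF assms] by simp_all

lemma orbits_disjoint:
  assumes "i < n" and "j < n" and "i \<noteq> j"
  shows "Orb i \<inter> Orb j = {}"
proof (rule ccontr)
  assume "Orb i \<inter> Orb j \<noteq> {}"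
  then obtain s where "s \<in> Orb i" "s \<in> Orb j"
    by blast
  then have "Orb i = Orb j"
    using rot_orbit_subset_if_meet orbit assms(1,2) by (metis subset_antisym)
  then show False
    using orbits_distinct assms by blast
qed

lemma finite_orbit_union: "finite orbit_union" and orbit_union_subset: "orbit_union \<subseteq> {0..<1}"
  using orbit_facts by auto

lemma card_orbit_union: "card orbit_union = n * q"
proof -
  have "card orbit_union = (\<Sum>i<n. card (Orb i))"
    by (rule card_UN_disjoint) (use orbit_facts orbits_disjoint in auto)
  also have "\<dots> = n * q"
    using orbit_facts by simp
  finally show ?thesis .
qed

context
  fixes \<pi> :: "nat \<Rightarrow> nat"
  assumes bij: "bij_betw \<pi> {..<n} {..<n}"
begin

lemma perm_less: "r < n \<Longrightarrow> \<pi> r < n"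
  using bij by (auto simp: bij_betw_def)

lemma interlace_mem:
  assumes "m < n * q"
  shows "interlace \<pi> m \<in> Orb (\<pi> (m mod n))"
  using orbit_sorted_list[OF perm_less[OF index_bounds(1)[OF assms]]] index_bounds(2)[OF assms]
  unfolding interlace_def by (metis nth_mem)

lemma interlace_sigma:
  assumes "m < n * q"
  shows "sigma d (interlace \<pi> m) = interlace \<pi> ((m + n * p) mod (n * q))"
proof -
  let ?i = "\<pi> (m mod n)"
  have "(m + n * p) mod (n * q) = n * ((m div n + p) mod q) + m mod n"
    using n_pos by (simp add: mod_mult2_eq add.commute)
  then have "interlace \<pi> ((m + n * p) mod (n * q))
      = sorted_list_of_set (Orb ?i) ! ((m div n + p) mod q)"
    using n_pos by (simp add: interlace_def)
  moreover have "sigma d (sorted_list_of_set (Orb ?i) ! (m div n))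
      = sorted_list_of_set (Orb ?i) ! ((m div n + p) mod q)"
    using orbit_facts(3,4)[OF perm_less] index_bounds[OF assms] by (simp add: rotates_by_def)
  ultimately show ?thesis
    by (simp add: interlace_def)
qed

lemma interlace_inj: "inj_on (interlace \<pi>) {..<n * q}"
proof (rule inj_onI)
  fix m m'
  assume m: "m \<in> {..<n * q}" and m': "m' \<in> {..<n * q}" and eq: "interlace \<pi> m = interlace \<pi> m'"
  have "\<pi> (m mod n) = \<pi> (m' mod n)"
  proof (rule ccontr)
    assume "\<pi> (m mod n) \<noteq> \<pi> (m' mod n)"
    then have "Orb (\<pi> (m mod n)) \<inter> Orb (\<pi> (m' mod n)) = {}"
      using orbits_disjoint perm_less index_bounds m m' by simp
    then show False
      using interlace_mem[of m] interlace_mem[of m'] m m' eq by auto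
  qed
  then have mod_eq: "m mod n = m' mod n"
    using bij index_bounds m m' by (auto simp: bij_betw_def inj_on_def)
  have "distinct (sorted_list_of_set (Orb (\<pi> (m mod n))))"
    by simp
  then have "m div n = m' div n"
    using eq m m' mod_eq index_bounds orbit_sorted_list[OF perm_less]
    by (simp add: interlace_def nth_eq_iff_index_eq)
  with mod_eq show "m = m'"
    by (metis div_mult_mod_eq)
qed

lemma interlace_image: "interlace \<pi> ` {..<n * q} = orbit_union"
proof
  show "interlace \<pi> ` {..<n * q} \<subseteq> orbit_union"
    using interlace_mem perm_less index_bounds by blast
  have "card (interlace \<pi> ` {..<n * q}) = card orbit_union"
    using card_image[OF interlace_inj] card_orbit_union by simp
  then show "orbit_union \<subseteq> interlace \<pi> ` {..<n * q}"
    using \<open>interlace \<pi> ` {..<n * q} \<subseteq> orbit_union\<close> finite_orbit_union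
    by (metis card_subset_eq)
qed

lemma rotation_sequence_interlace: "rotation_sequence d (n * q) (n * p) (interlace \<pi>)"
proof
  show "0 < n * p" and "n * p < n * q"
    using n_pos p_pos p_less by simp_all
  fix m
  assume "m < n * q"
  then have "interlace \<pi> m \<in> Orb (\<pi> (m mod n))" and "Orb (\<pi> (m mod n)) \<subseteq> {0..<1}"
    using interlace_mem orbit_facts(2)[OF perm_less] index_bounds by simp_all
  then show "0 \<le> interlace \<pi> m \<and> interlace \<pi> m < 1"
    by auto
  show "sigma d (interlace \<pi> m) = interlace \<pi> ((m + n * p) mod (n * q))"
    using interlace_sigma[OF \<open>m < n * q\<close>] .
qed (use d_ge_2 in simp)

lemma leading_digit_seq_interlace:
  assumes "m < n * q"
  shows "leading_digit_seq d (n * q) (n * p) (interlace \<pi>) m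
    = rep_seq d q p (Min (Orb (\<pi> (m mod n)))) (m div n)"
proof -
  have "m < n * q - n * p \<longleftrightarrow> m div n < q - p"
    using n_pos by (simp add: div_less_iff_less_mult diff_mult_distrib2 mult.commute)
  then show ?thesis
    using rep_seq_rot_orbit[OF orbit[OF perm_less] coprime q_ge_2 _ index_bounds(2)[OF assms]]
      index_bounds(1)[OF assms] d_ge_2
    by (simp add: leading_digit_seq_def interlace_def)
qed

lemma sorted_orbit_union_eq_interlace_iff_dseq:
  "sorted_list_of_set orbit_union = map (interlace \<pi>) [0..<n * q]
    \<longleftrightarrow> dseq d (n * q) (leading_digit_seq d (n * q) (n * p) (interlace \<pi>))"
proof -
  interpret rotation_sequence d "n * q" "n * p" "interlace \<pi>"
    by (rule rotation_sequence_interlace)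
  have "sorted_list_of_set orbit_union = map (interlace \<pi>) [0..<n * q]
      \<longleftrightarrow> sorted_wrt (<) (map (interlace \<pi>) [0..<n * q])"
    using sorted_list_of_set_unique[OF finite_orbit_union] interlace_image
    by (metis atLeast_upt card_orbit_union length_map length_upt list.set_map minus_nat.diff_0)
  also have "\<dots> \<longleftrightarrow> (\<forall>m. Suc m < n * q \<longrightarrow> interlace \<pi> m < interlace \<pi> (Suc m))"
    by (simp add: sorted_wrt_iff_nth_Suc_transp)
  also have "\<dots> \<longleftrightarrow> dseq d (n * q) (leading_digit_seq d (n * q) (n * p) (interlace \<pi>))"
  proof
    assume "\<forall>m. Suc m < n * q \<longrightarrow> interlace \<pi> m < interlace \<pi> (Suc m)"
    then show "dseq d (n * q) (leading_digit_seq d (n * q) (n * p) (interlace \<pi>))"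
      using dseq_if_strict_mono by blast
  next
    assume "dseq d (n * q) (leading_digit_seq d (n * q) (n * p) (interlace \<pi>))"
    show "\<forall>m. Suc m < n * q \<longrightarrow> interlace \<pi> m < interlace \<pi> (Suc m)"
    proof (intro allI impI)
      fix m
      assume "Suc m < n * q"
      then have "interlace \<pi> m \<noteq> interlace \<pi> (Suc m)"
        using inj_onD[OF interlace_inj, of m "Suc m"] by auto
      then show "interlace \<pi> m < interlace \<pi> (Suc m)"
        using mono_if_dseq[OF \<open>dseq _ _ _\<close> \<open>Suc m < n * q\<close>] by simp
    qed
  qed
  finally show ?thesis .
qed

end

lemma sorted_orbit_union_stride:
  assumes rot: "rotates_by d orbit_union (n * p)" and "r < n" and "k < q"
  shows "sorted_list_of_set orbit_union ! (r + n * k)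
    = (sigma d ^^ (k * inv_mod p q)) (sorted_list_of_set orbit_union ! r)"
proof -
  let ?t = "k * inv_mod p q"
  have "n \<le> n * q"
    using q_ge_2 by simp
  then have "r < n * q"
    using assms(2) by linarith
  then have "(sigma d ^^ ?t) (sorted_list_of_set orbit_union ! r)
      = sorted_list_of_set orbit_union ! ((r + ?t * (n * p)) mod (n * q))"
    using rotates_by_iterate[OF rot] card_orbit_union by simp
  also have "r + ?t * (n * p) = r + n * (?t * p)"
    by simp
  also have "(r + n * (?t * p)) mod (n * q) = r + n * (?t * p mod q)"
    using assms(2) by (simp add: mod_mult2_eq)
  also have "?t * p mod q = k"
    using mult_inv_mod_mult_mod[OF coprime q_ge_2 assms(3)] .
  finally show ?thesis ..
qed

lemma orbit_sorted_list_eq_stride: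
  assumes rot: "rotates_by d orbit_union (n * p)" and "r < n" and "i < n"
    and mem: "sorted_list_of_set orbit_union ! r \<in> Orb i"
  shows "sorted_list_of_set (Orb i)
    = map (\<lambda>k. sorted_list_of_set orbit_union ! (r + n * k)) [0..<q]"
proof -
  let ?u = "sorted_list_of_set orbit_union"
  let ?L = "map (\<lambda>k. ?u ! (r + n * k)) [0..<q]"
  have "sorted_wrt (<) ?L"
    unfolding sorted_wrt_iff_nth_less
  proof (intro allI impI)
    fix k k'
    assume "k < k'" "k' < length ?L"
    then show "?L ! k < ?L ! k'"
      using sorted_wrt_nth_less[of "(<)" ?u "r + n * k" "r + n * k'"] add_mult_less_mult[OF assms(2), of k' q] card_orbit_union
        finite_orbit_union n_pos by simp
  qed
  moreover have "set ?L \<subseteq> Orb i"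
    using sorted_orbit_union_stride[OF rot assms(2)] rot_orbit_closed[OF orbit[OF assms(3)] mem]
    by auto
  moreover have "card (set ?L) = q"
    using distinct_card[of ?L] \<open>sorted_wrt (<) ?L\<close> by (simp add: strict_sorted_iff)
  ultimately show ?thesis
    using sorted_list_of_set_unique[OF orbit_facts(1)[OF assms(3)]] orbit_facts(3)[OF assms(3)]
    by (metis card_subset_eq length_map length_upt minus_nat.diff_0 orbit_facts(1)[OF assms(3)])
qed

lemma interlace_if_rotates_by:
  assumes rot: "rotates_by d orbit_union (n * p)"
  obtains \<pi> where "bij_betw \<pi> {..<n} {..<n}"
    and "sorted_list_of_set orbit_union = map (interlace \<pi>) [0..<n * q]"
proof -
  let ?u = "sorted_list_of_set orbit_union"
  define \<pi> where "\<pi> r = (SOME i. i < n \<and> ?u ! r \<in> Orb i)" for r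
  have u_mem: "?u ! m \<in> orbit_union" if "m < n * q" for m
    using that card_orbit_union finite_orbit_union by (metis nth_mem set_sorted_list_of_set
        sorted_list_of_set.length_sorted_key_list_of_set)
  have \<pi>: "\<pi> r < n \<and> ?u ! r \<in> Orb (\<pi> r)" if "r < n" for r
  proof -
    have "?u ! r \<in> orbit_union"
      using u_mem add_mult_less_mult[OF that, of 0 q] q_ge_2 by simp
    then have "\<exists>i. i < n \<and> ?u ! r \<in> Orb i"
      by blast
    then show ?thesis
      unfolding \<pi>_def by (rule someI_ex)
  qed
  have stride: "sorted_list_of_set (Orb (\<pi> r)) = map (\<lambda>k. ?u ! (r + n * k)) [0..<q]" if "r < n" for r
    using orbit_sorted_list_eq_stride[OF rot that] \<pi>[OF that] by blast
  have "inj_on \<pi> {..<n}"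
  proof (rule inj_onI)
    fix r r'
    assume r: "r \<in> {..<n}" and r': "r' \<in> {..<n}" and eq: "\<pi> r = \<pi> r'"
    then have "?u ! r \<in> set (sorted_list_of_set (Orb (\<pi> r')))"
      using \<pi>[of r] \<pi>[of r'] orbit_sorted_list(2) by simp
    then obtain k where k: "k < q" "?u ! r = ?u ! (r' + n * k)"
      using stride[of r'] r' by auto
    have "distinct ?u"
      by simp
    then have "r = r' + n * k"
      using k r r' add_mult_less_mult[of r n 0 q] add_mult_less_mult[of r' n k q] q_ge_2
        card_orbit_union finite_orbit_union by (simp add: nth_eq_iff_index_eq)
    then show "r = r'"
      using r by (cases k) simp_all
  qed
  then have "bij_betw \<pi> {..<n} {..<n}"
    using \<pi> by (simp add: bij_betw_def endo_inj_surj image_subset_iff)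
  moreover have "?u = map (interlace \<pi>) [0..<n * q]"
  proof (rule nth_equalityI)
    show "length ?u = length (map (interlace \<pi>) [0..<n * q])"
      using card_orbit_union by simp
    fix m
    assume "m < length ?u"
    then have m: "m < n * q"
      using card_orbit_union by simp
    have "interlace \<pi> m = ?u ! (m mod n + n * (m div n))"
      using stride[OF index_bounds(1)[OF m]] index_bounds(2)[OF m] by (simp add: interlace_def)
    then show "?u ! m = map (interlace \<pi>) [0..<n * q] ! m"
      using m by simp
  qed
  ultimately show ?thesis
    using that by blast
qed

lemma rotates_by_iff_sorted_interlace:
  "rotates_by d orbit_union (n * p) \<longleftrightarrow>
    (\<exists>\<pi>. bij_betw \<pi> {..<n} {..<n} \<and> sorted_list_of_set orbit_union = map (interlace \<pi>) [0..<n * q])"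
proof
  assume "rotates_by d orbit_union (n * p)"
  then show "\<exists>\<pi>. bij_betw \<pi> {..<n} {..<n} \<and> sorted_list_of_set orbit_union = map (interlace \<pi>) [0..<n * q]"
    by (blast elim: interlace_if_rotates_by)
next
  assume "\<exists>\<pi>. bij_betw \<pi> {..<n} {..<n} \<and> sorted_list_of_set orbit_union = map (interlace \<pi>) [0..<n * q]"
  then obtain \<pi> where bij: "bij_betw \<pi> {..<n} {..<n}"
    and sorted: "sorted_list_of_set orbit_union = map (interlace \<pi>) [0..<n * q]"
    by blast
  have "(j + n * p) mod (n * q) < n * q" for j
    using n_pos q_ge_2 by simp
  then show "rotates_by d orbit_union (n * p)"
    unfolding rotates_by_def sorted card_orbit_union
    using finite_orbit_union orbit_union_subset interlace_sigma[OF bij] by simp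
qed

lemma interlaceable_iff:
  "interlaceable d q n (\<lambda>i. rep_seq d q p (Min (Orb i))) \<longleftrightarrow>
    (\<exists>\<pi>. bij_betw \<pi> {..<n} {..<n} \<and> dseq d (n * q) (leading_digit_seq d (n * q) (n * p) (interlace \<pi>)))"
proof -
  have "dseq d (n * q) (\<lambda>m. rep_seq d q p (Min (Orb (\<pi> (m mod n)))) (m div n))
      = dseq d (n * q) (leading_digit_seq d (n * q) (n * p) (interlace \<pi>))"
    if "bij_betw \<pi> {..<n} {..<n}" for \<pi>
    using leading_digit_seq_interlace[OF that] by (intro dseq_cong) simp
  then show ?thesis
    unfolding interlaceable_def by blast
qed

end

theorem corollary3p3:
  fixes d q p n :: nat and Orb :: "nat \<Rightarrow> real set"
  assumes "d \<ge> 2" and "q \<ge> 2" and "p < q" and "coprime p q" and "n \<ge> 1"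
    and "\<And>i. i < n \<Longrightarrow> rot_orbit d p q (Orb i)"
    and "\<And>i j. i < n \<Longrightarrow> j < n \<Longrightarrow> i \<noteq> j \<Longrightarrow> Orb i \<noteq> Orb j"
  shows "rotates_by d (\<Union>i<n. Orb i) (n * p) \<longleftrightarrow>
         interlaceable d q n (\<lambda>i. rep_seq d q p (Min (Orb i)))"
proof -
  interpret rotational_orbits d p q n Orb
    by unfold_locales (fact assms)+
  have "rotates_by d (\<Union>i<n. Orb i) (n * p) \<longleftrightarrow>
      (\<exists>\<pi>. bij_betw \<pi> {..<n} {..<n} \<and> sorted_list_of_set orbit_union = map (interlace \<pi>) [0..<n * q])"
    by (rule rotates_by_iff_sorted_interlace)
  also have "\<dots> \<longleftrightarrow>
      (\<exists>\<pi>. bij_betw \<pi> {..<n} {..<n} \<and> dseq d (n * q) (leading_digit_seq d (n * q) (n * p) (interlace \<pi>)))"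
    using sorted_orbit_union_eq_interlace_iff_dseq by blast
  also have "\<dots> \<longleftrightarrow> interlaceable d q n (\<lambda>i. rep_seq d q p (Min (Orb i)))"
    by (rule interlaceable_iff[symmetric])
  finally show ?thesis .
qed

end
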